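(* Consider the multi-market oligopoly of equal capacity $\mathcal{G}$ described in the context, and suppose: each $u_x$ ($x\in E$) is concave and differentiable; $c$ is convex and differentiable; and at least one of the following holds: (a) all but at most one of the $u_x$ are strictly concave, or (b) $c$ is strictly convex. Then every pure-strategy Nash equilibrium $\mathbf{S}^*=(\mathbf{s}_i^* )_{i=1}^n$ of $\mathcal{G}$ is symmetric, i.e. $\mathbf{s}_i^*=\mathbf{s}_j^*$ for all $i,j\in N$.
   Context: Let $N=\{1,\dots,n\}$ be a set of firms (players) and $E=\{1,\dots,m\}$ a set of markets. Let $\Delta^{m-1}=\{\mathbf{v}\in\mathbb{R}^m:\mathbf{v}\ge 0,\ \mathbf{v}^{T}\mathbf{1}=1\}$. Each firm $i$ chooses a strategy $\mathbf{s}_i=(s_{ix})_{x=1}^m\in S_i=\Delta^{m-1}$. For each market $x$ let $u_x:\mathbb{R}_{\ge 0}\to\mathbb{R}_{\ge 0}$ with $u_x(0)=0$, and let $p_x(t)=u_x(t)/t$ for $t>0$. Let $c:\Delta^{m-1}\to\mathbb{R}_{\ge 0}$ be a common cost function. For a strategy profile $\mathbf{S}=(\mathbf{s}_i)_{i=1}^n$ put $s_x=\sum_{i=1}^n s_{ix}$ and $\mathbf{s}_{-i}=\sum_{j\ne i}\mathbf{s}_j$. The payoff of player $i$ is $u_i(\mathbf{s}_i;\mathbf{s}_{-i})=\sum_{x=1}^m p_x(s_x)s_{ix}-c(\mathbf{s}_i)$ (a term with $s_x=0$ is taken to be $0$). The game is $\mathcal{G}=(N,S,(u_i)_{i=1}^n)$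 with $S=\prod_{i=1}^n\Delta^{m-1}$. *)

theory Defs
  imports "HOL-Analysis.Analysis"
begin

definition strictly_convex_on :: "'a::real_vector set \<Rightarrow> ('a \<Rightarrow> real) \<Rightarrow> bool" where
  "strictly_convex_on S f \<longleftrightarrow>
     (\<forall>x\<in>S. \<forall>y\<in>S. x \<noteq> y \<longrightarrow> (\<forall>t::real. 0 < t \<and> t < 1 \<longrightarrow>
        f ((1 - t) *\<^sub>R x + t *\<^sub>R y) < (1 - t) * f x + t * f y))"

definition strictly_concave_on :: "'a::real_vector set \<Rightarrow> ('a \<Rightarrow> real) \<Rightarrow> bool" where
  "strictly_concave_on S f \<longleftrightarrow> strictly_convex_on S (\<lambda>x. - f x)"

definition strategy_simplex :: "(real ^ 'm::finite) set" where
  "strategy_simplex = {v. (\<forall>x. 0 \<le> v $ x) \<and> (\<Sum>x\<in>UNIV. v $ x) = 1}"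

definition payoff :: "('m::finite \<Rightarrow> real \<Rightarrow> real) \<Rightarrow> (real ^ 'm \<Rightarrow> real)
    \<Rightarrow> real ^ 'm \<Rightarrow> real ^ 'm \<Rightarrow> real" where
  "payoff u c si s_others =
     (\<Sum>x\<in>UNIV. (let sx = si $ x + s_others $ x in
                   if sx = 0 then 0 else (u x sx / sx) * si $ x)) - c si"

definition others :: "nat \<Rightarrow> (nat \<Rightarrow> real ^ 'm::finite) \<Rightarrow> nat \<Rightarrow> real ^ 'm" where
  "others n S i = (\<Sum>j\<in>{1..n} - {i}. S j)"

definition nash_equilibrium :: "nat \<Rightarrow> ('m::finite \<Rightarrow> real \<Rightarrow> real) \<Rightarrow> (real ^ 'm \<Rightarrow> real)
    \<Rightarrow> (nat \<Rightarrow> real ^ 'm) \<Rightarrow> bool" where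
  "nash_equilibrium n u c S \<longleftrightarrow>
     (\<forall>i\<in>{1..n}. S i \<in> strategy_simplex) \<and>
     (\<forall>i\<in>{1..n}. \<forall>s\<in>strategy_simplex. payoff u c s (others n S i) \<le> payoff u c (S i) (others n S i))"

end

theory Submission
  imports Defs
begin

text \<open>If two firms i and j play s_i \<noteq> s_j at an equilibrium, let both move a fraction e
  towards each other. Since s_i + s_-i = s_j + s_-j, both face the same aggregate T, and in
  market x the sum of their two revenue changes has derivative -p_x'(T_x) (s_jx - s_ix)^2 \<ge> 0
  at e = 0, because the price p_x(t) = u_x(t)/t of a concave u_x with u_x(0) = 0 is
  nonincreasing. Convexity of c bounds the sum of the two cost changes by -\<kappa> e, where
  \<kappa> = 2 (c(s_i) + c(s_j) - 2 c((s_i + s_j)/2)) \<ge> 0. Either strictness hypothesis makes one of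
  these two contributions strictly positive, so for small e one of the two deviations is
  profitable.\<close>

lemma strictly_convex_onD:
  assumes "strictly_convex_on K c" "x \<in> K" "y \<in> K" "x \<noteq> y" "0 < t" "t < 1"
  shows "c ((1 - t) *\<^sub>R x + t *\<^sub>R y) < (1 - t) * c x + t * c y"
  using assms unfolding strictly_convex_on_def by blast

lemma concave_on_below_tangent:
  fixes f :: "real \<Rightarrow> real"
  assumes "concave_on A f" "connected A" "T \<in> interior A" "y \<in> A"
    and "(f has_real_derivative d) (at T within A)"
  shows "f y - f T \<le> d * (y - T)"
proof -
  have "(- d) * (y - T) \<le> - f y - (- f T)"
    using assms by (intro convex_on_imp_above_tangent) (auto simp: concave_on_def intro: derivative_intros)
  then show ?thesis by simp
qed

lemma concave_on_deriv_mult_le: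
  fixes f :: "real \<Rightarrow> real"
  assumes "concave_on {0..} f" "f 0 = 0" "0 < T" "(f has_real_derivative d) (at T)"
  shows "d * T \<le> f T"
  using concave_on_below_tangent[of "{0..}" f T 0 d] assms
  by (simp add: has_field_derivative_at_within)

lemma strictly_concave_on_deriv_mult_less:
  fixes f :: "real \<Rightarrow> real"
  assumes "strictly_concave_on {0..} f" "concave_on {0..} f" "f 0 = 0" "0 < T"
    and "(f has_real_derivative d) (at T)"
  shows "d * T < f T"
proof -
  have "- f ((1 - 1/2) *\<^sub>R 0 + (1/2) *\<^sub>R T) < (1 - 1/2) * - f 0 + (1/2) * - f T"
    using assms(1,4) unfolding strictly_concave_on_def by (intro strictly_convex_onD) auto
  then have "f T / 2 < f (T / 2)"
    using assms(3) by simp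
  moreover have "f (T / 2) - f T \<le> d * (T / 2 - T)"
    using concave_on_below_tangent[of "{0..}" f T "T/2" d] assms
    by (simp add: has_field_derivative_at_within)
  ultimately show ?thesis by simp
qed

text \<open>Firms with shares a and b of a market of aggregate T, each moving e (b - a) towards the
  other unilaterally (so the aggregate seen by each changes by its own move only): the sum of
  their revenue changes at unit price g.\<close>

definition swap_gain :: "(real \<Rightarrow> real) \<Rightarrow> real \<Rightarrow> real \<Rightarrow> real \<Rightarrow> real \<Rightarrow> real" where
  "swap_gain g T a b e =
     g (T + e * (b - a)) * (a + e * (b - a)) + g (T - e * (b - a)) * (b - e * (b - a)) - g T * (a + b)"

lemma swap_gain_0 [simp]: "swap_gain g T a b 0 = 0"
  by (simp add: swap_gain_def algebra_simps)

lemma swap_gain_same [simp]: "swap_gain g T a a = (\<lambda>e. 0)"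
  by (simp add: swap_gain_def fun_eq_iff algebra_simps)

lemma has_real_derivative_swap_gain:
  assumes "(g has_real_derivative Dg) (at T)"
  shows "(swap_gain g T a b has_real_derivative - Dg * (b - a)\<^sup>2) (at 0)"
proof -
  have "((\<lambda>e. g (T + e * (b - a))) has_real_derivative Dg * (b - a)) (at 0)"
    by (rule DERIV_chain2[where f = g and g = "\<lambda>e. T + e * (b - a)"])
      (use assms in \<open>auto intro!: derivative_eq_intros\<close>)
  moreover have "((\<lambda>e. g (T - e * (b - a))) has_real_derivative Dg * - (b - a)) (at 0)"
    by (rule DERIV_chain2[where f = g and g = "\<lambda>e. T - e * (b - a)"])
      (use assms in \<open>auto intro!: derivative_eq_intros\<close>)
  ultimately show ?thesis
    unfolding swap_gain_def
    by (auto intro!: derivative_eq_intros simp: algebra_simps power2_eq_square)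
qed

lemma concave_average_swap_gain_deriv:
  fixes u :: "real \<Rightarrow> real"
  assumes u: "concave_on {0..} u" "u 0 = 0" "u differentiable (at T within {0..})"
    and "0 \<le> a" "a \<le> T" "0 \<le> b" "b \<le> T"
  obtains D where "(swap_gain (\<lambda>t. u t / t) T a b has_real_derivative D) (at 0)" "0 \<le> D"
    and "strictly_concave_on {0..} u \<Longrightarrow> a \<noteq> b \<Longrightarrow> 0 < D"
proof (cases "a = b")
  case True
  then show ?thesis
    using that[of 0] by simp
next
  case False
  then have T: "0 < T"
    using assms(4-7) by linarith
  then obtain d where d: "(u has_real_derivative d) (at T)"
    using u(3) at_within_interior[of T "{0..}"] by (auto simp: real_differentiable_def)
  define Dg where "Dg = (d * T - u T) / T\<^sup>2"
  have "((\<lambda>t. u t / t) has_real_derivative Dg) (at T)"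
    unfolding Dg_def using T by (auto intro!: derivative_eq_intros d simp: power2_eq_square field_simps)
  moreover have "Dg \<le> 0"
    using concave_on_deriv_mult_le[OF u(1,2) T d] unfolding Dg_def by (simp add: divide_le_0_iff)
  moreover have "Dg < 0" if "strictly_concave_on {0..} u"
    using strictly_concave_on_deriv_mult_less[OF that u(1,2) T d] T unfolding Dg_def
    by (simp add: divide_less_0_iff)
  ultimately show ?thesis
    using that[OF has_real_derivative_swap_gain] False
    by (metis mult_nonneg_nonneg mult_pos_pos neg_0_le_iff_le neg_0_less_iff_less
        right_minus_eq zero_le_power2 zero_less_power2)
qed

lemma convex_on_midpoint_le:
  assumes "convex_on K c" "x \<in> K" "y \<in> K"
  shows "2 * c (midpoint x y) \<le> c x + c y"
  using convex_onD[OF assms(1), of "1/2" x y] assms(2,3)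
  by (simp add: midpoint_def scaleR_add_right)

lemma strictly_convex_on_midpoint_less:
  assumes "strictly_convex_on K c" "x \<in> K" "y \<in> K" "x \<noteq> y"
  shows "2 * c (midpoint x y) < c x + c y"
  using strictly_convex_onD[OF assms, of "1/2"]
  by (simp add: midpoint_def scaleR_add_right)

lemma convex_on_swap_le:
  assumes "convex_on K c" "x \<in> K" "y \<in> K" "0 \<le> e" "e \<le> 1/2"
  shows "c ((1 - e) *\<^sub>R x + e *\<^sub>R y) + c ((1 - e) *\<^sub>R y + e *\<^sub>R x) - c x - c y
           \<le> - 2 * e * (c x + c y - 2 * c (midpoint x y))"
proof -
  have m: "midpoint x y \<in> K"
    using convexD[OF convex_on_imp_convex[OF assms(1)] assms(2,3), of "1/2" "1/2"]
    by (simp add: midpoint_def scaleR_add_right)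
  have shift: "(1 - e) *\<^sub>R p + e *\<^sub>R q = (1 - 2 * e) *\<^sub>R p + (2 * e) *\<^sub>R midpoint p q"
    for p q :: 'a
    by (simp add: midpoint_def algebra_simps) (metis mult_2_right scaleR_add_left)
  have "c ((1 - e) *\<^sub>R x + e *\<^sub>R y) \<le> (1 - 2 * e) * c x + (2 * e) * c (midpoint x y)"
    unfolding shift using assms by (intro convex_onD[OF assms(1)] m) auto
  moreover have "c ((1 - e) *\<^sub>R y + e *\<^sub>R x) \<le> (1 - 2 * e) * c y + (2 * e) * c (midpoint x y)"
    unfolding shift midpoint_sym[of y] using assms by (intro convex_onD[OF assms(1)] m) auto
  ultimately show ?thesis
    by (simp add: algebra_simps)
qed

lemma strategy_simplex_neq_two_coords:
  assumes "s \<in> strategy_simplex" "s' \<in> strategy_simplex" "s \<noteq> s'"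
  obtains x y where "x \<noteq> y" "s $ x \<noteq> s' $ x" "s $ y \<noteq> s' $ y"
proof -
  obtain x where x: "s $ x \<noteq> s' $ x"
    using assms(3) by (metis vec_eq_iff)
  have "(\<Sum>z\<in>UNIV. s $ z - s' $ z) = 0"
    using assms(1,2) by (simp add: strategy_simplex_def sum_subtractf)
  moreover have "(\<Sum>z\<in>UNIV. s $ z - s' $ z) = (s $ x - s' $ x) + (\<Sum>z\<in>UNIV - {x}. s $ z - s' $ z)"
    by (simp add: sum.remove)
  ultimately have "(\<Sum>z\<in>UNIV - {x}. s $ z - s' $ z) \<noteq> 0"
    using x by linarith
  then obtain y where "y \<in> UNIV - {x}" "s $ y - s' $ y \<noteq> 0"
    by (meson sum.neutral)
  with x that show ?thesis
    by auto
qed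

lemma strategy_simplex_neq_coord_satisfying:
  assumes "card {x. \<not> P x} \<le> 1"
    and "s \<in> strategy_simplex" "s' \<in> strategy_simplex" "s \<noteq> s'"
  obtains x :: "'m::finite" where "s $ x \<noteq> s' $ x" "P x"
proof -
  obtain x y where xy: "x \<noteq> y" "s $ x \<noteq> s' $ x" "s $ y \<noteq> s' $ y"
    using strategy_simplex_neq_two_coords[OF assms(2-4)] .
  have "\<not> {x, y} \<subseteq> {x. \<not> P x}"
  proof
    assume "{x, y} \<subseteq> {x. \<not> P x}"
    then have "card {x, y} \<le> card {x. \<not> P x}"
      by (intro card_mono) auto
    with assms(1) xy(1) show False
      by simp
  qed
  with xy that show ?thesis
    by blast
qed

lemma has_real_derivative_pos_right:
  assumes "(f has_real_derivative l) (at x)" "0 < l" "0 < \<epsilon>"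
  obtains h where "0 < h" "h \<le> \<epsilon>" "f x < f (x + h)"
proof -
  obtain d where "0 < d" "\<And>h. 0 < h \<Longrightarrow> h < d \<Longrightarrow> f x < f (x + h)"
    using DERIV_pos_inc_right[OF assms(1,2)] by blast
  then show ?thesis
    using that[of "min (d/2) \<epsilon>"] assms(3) by simp
qed

text \<open>Since x / 0 = 0 in HOL, the case s_x = 0 of the definition needs no special treatment.\<close>

lemma payoff_altdef: "payoff u c s a = (\<Sum>x\<in>UNIV. u x (s $ x + a $ x) / (s $ x + a $ x) * s $ x) - c s"
  unfolding payoff_def Let_def by (intro arg_cong2[where f = "(-)"] sum.cong) auto

lemma payoff_swap_sum:
  fixes si sj a b :: "real ^ 'm::finite"
  assumes "si + a = sj + b"
  shows "payoff u c ((1 - e) *\<^sub>R si + e *\<^sub>R sj) a - payoff u c si a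
           + (payoff u c ((1 - e) *\<^sub>R sj + e *\<^sub>R si) b - payoff u c sj b)
         = (\<Sum>x\<in>UNIV. swap_gain (\<lambda>t. u x t / t) ((si + a) $ x) (si $ x) (sj $ x) e)
           - (c ((1 - e) *\<^sub>R si + e *\<^sub>R sj) + c ((1 - e) *\<^sub>R sj + e *\<^sub>R si) - c si - c sj)"
proof -
  have gain: "swap_gain (\<lambda>t. u x t / t) ((si + a) $ x) (si $ x) (sj $ x) e
      = (u x (((1 - e) *\<^sub>R si + e *\<^sub>R sj) $ x + a $ x) / (((1 - e) *\<^sub>R si + e *\<^sub>R sj) $ x + a $ x)
           * ((1 - e) *\<^sub>R si + e *\<^sub>R sj) $ x
         - u x (si $ x + a $ x) / (si $ x + a $ x) * si $ x)
      + (u x (((1 - e) *\<^sub>R sj + e *\<^sub>R si) $ x + b $ x) / (((1 - e) *\<^sub>R sj + e *\<^sub>R si) $ x + b $ x)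
           * ((1 - e) *\<^sub>R sj + e *\<^sub>R si) $ x
         - u x (sj $ x + b $ x) / (sj $ x + b $ x) * sj $ x)" for x
  proof -
    have bx: "b $ x = si $ x + a $ x - sj $ x"
      using assms by (metis add_diff_cancel_left' vector_add_component)
    show ?thesis
      unfolding swap_gain_def by (simp add: bx algebra_simps add_divide_distrib)
  qed
  show ?thesis
    unfolding payoff_altdef gain by (simp add: sum.distrib sum_subtractf)
qed

lemma best_responses_to_equal_totals_eq:
  fixes u :: "'m::finite \<Rightarrow> real \<Rightarrow> real"
    and c :: "real ^ 'm \<Rightarrow> real"
    and si sj a b :: "real ^ 'm"
  assumes u_zero: "\<And>x. u x 0 = 0"
    and u_concave: "\<And>x. concave_on {0..} (u x)"
    and u_diff: "\<And>x t. 0 \<le> t \<Longrightarrow> u x differentiable (at t within {0..})"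
    and c_convex: "convex_on strategy_simplex c"
    and strict: "card {x. \<not> strictly_concave_on {0..} (u x)} \<le> 1
                 \<or> strictly_convex_on strategy_simplex c"
    and si: "si \<in> strategy_simplex" and sj: "sj \<in> strategy_simplex"
    and a: "\<And>x. 0 \<le> a $ x" and b: "\<And>x. 0 \<le> b $ x"
    and total: "si + a = sj + b"
    and best_i: "\<And>s. s \<in> strategy_simplex \<Longrightarrow> payoff u c s a \<le> payoff u c si a"
    and best_j: "\<And>s. s \<in> strategy_simplex \<Longrightarrow> payoff u c s b \<le> payoff u c sj b"
  shows "si = sj"
proof (rule ccontr)
  assume ne: "si \<noteq> sj"
  define \<kappa> where "\<kappa> = 2 * (c si + c sj - 2 * c (midpoint si sj))"
  define gain where "gain x = swap_gain (\<lambda>t. u x t / t) ((si + a) $ x) (si $ x) (sj $ x)" for x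
  define G where "G e = (\<Sum>x\<in>UNIV. gain x e) + \<kappa> * e" for e
  have "\<exists>D. (gain x has_real_derivative D) (at 0) \<and> 0 \<le> D
          \<and> (strictly_concave_on {0..} (u x) \<longrightarrow> si $ x \<noteq> sj $ x \<longrightarrow> 0 < D)" for x
  proof -
    have "(si + a) $ x = sj $ x + b $ x"
      using total by (metis vector_add_component)
    then have "0 \<le> si $ x" "si $ x \<le> (si + a) $ x" "0 \<le> sj $ x" "sj $ x \<le> (si + a) $ x"
      using si sj a[of x] b[of x] by (simp_all add: strategy_simplex_def)
    then obtain D where "(gain x has_real_derivative D) (at 0)" "0 \<le> D"
      "strictly_concave_on {0..} (u x) \<Longrightarrow> si $ x \<noteq> sj $ x \<Longrightarrow> 0 < D"
      unfolding gain_def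
      using concave_average_swap_gain_deriv[OF u_concave[of x] u_zero[of x] u_diff[of "(si + a) $ x" x],
          of "si $ x" "sj $ x"]
      by auto
    then show ?thesis
      by blast
  qed
  then obtain D where D: "\<And>x. (gain x has_real_derivative D x) (at 0)" "\<And>x. 0 \<le> D x"
    "\<And>x. strictly_concave_on {0..} (u x) \<Longrightarrow> si $ x \<noteq> sj $ x \<Longrightarrow> 0 < D x"
    by metis
  have "0 < (\<Sum>x\<in>UNIV. D x) + \<kappa>"
  proof (cases "strictly_convex_on strategy_simplex c")
    case True
    then have "0 < \<kappa>"
      unfolding \<kappa>_def using strictly_convex_on_midpoint_less[OF True si sj ne] by simp
    then show ?thesis
      using D(2) by (simp add: add_nonneg_pos sum_nonneg)
  next
    case False
    with strict have "card {x. \<not> strictly_concave_on {0..} (u x)} \<le> 1"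
      by blast
    then obtain x where "si $ x \<noteq> sj $ x" "strictly_concave_on {0..} (u x)"
      using si sj ne by (rule strategy_simplex_neq_coord_satisfying)
    then have "0 < (\<Sum>x\<in>UNIV. D x)"
      using D(2,3) by (intro sum_pos2) auto
    moreover have "0 \<le> \<kappa>"
      unfolding \<kappa>_def using convex_on_midpoint_le[OF c_convex si sj] by simp
    ultimately show ?thesis
      by simp
  qed
  moreover have "(G has_real_derivative (\<Sum>x\<in>UNIV. D x) + \<kappa>) (at 0)"
    unfolding G_def by (auto intro!: derivative_eq_intros D(1))
  ultimately obtain h where h: "0 < h" "h \<le> 1/2" "G 0 < G (0 + h)"
    using has_real_derivative_pos_right[of G _ 0 "1/2"] by auto
  have "G h \<le> 0"
  proof -
    have "(1 - h) *\<^sub>R si + h *\<^sub>R sj \<in> strategy_simplex" "(1 - h) *\<^sub>R sj + h *\<^sub>R si \<in> strategy_simplex"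
      using convex_on_imp_convex[OF c_convex] si sj h(1,2) by (simp_all add: convexD)
    then have "payoff u c ((1 - h) *\<^sub>R si + h *\<^sub>R sj) a - payoff u c si a
               + (payoff u c ((1 - h) *\<^sub>R sj + h *\<^sub>R si) b - payoff u c sj b) \<le> 0"
      using best_i best_j by (simp add: add_nonpos_nonpos)
    then show ?thesis
      using convex_on_swap_le[OF c_convex si sj, of h] h(1,2)
      unfolding G_def gain_def \<kappa>_def payoff_swap_sum[OF total] by (simp add: algebra_simps; linarith)
  qed
  moreover have "G 0 = 0"
    by (simp add: G_def gain_def)
  ultimately show False
    using h(3) by simp
qed

lemma others_nonneg:
  assumes "\<And>j. j \<in> {1..n} \<Longrightarrow> S j \<in> strategy_simplex"
  shows "0 \<le> others n S i $ x"
  unfolding others_def sum_component using assms by (intro sum_nonneg) (auto simp: strategy_simplex_def)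

lemma add_others: "i \<in> {1..n} \<Longrightarrow> S i + others n S i = (\<Sum>j\<in>{1..n}. S j)"
  unfolding others_def by (simp add: sum.remove)

theorem proposition3:
  fixes n :: nat
    and u :: "'m::finite \<Rightarrow> real \<Rightarrow> real"
    and c :: "real ^ 'm \<Rightarrow> real"
    and S :: "nat \<Rightarrow> real ^ 'm"
  assumes u_nonneg: "\<And>x t. 0 \<le> t \<Longrightarrow> 0 \<le> u x t"
    and u_zero: "\<And>x. u x 0 = 0"
    and u_concave: "\<And>x. concave_on {0..} (u x)"
    and u_diff: "\<And>x t. 0 \<le> t \<Longrightarrow> u x differentiable (at t within {0..})"
    and c_nonneg: "\<And>s. s \<in> strategy_simplex \<Longrightarrow> 0 \<le> c s"
    and c_convex: "convex_on strategy_simplex c"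
    and c_diff: "\<And>s. s \<in> strategy_simplex \<Longrightarrow> c differentiable (at s within strategy_simplex)"
    and strict: "card {x. \<not> strictly_concave_on {0..} (u x)} \<le> 1
                 \<or> strictly_convex_on strategy_simplex c"
    and NE: "nash_equilibrium n u c S"
  shows "\<forall>i\<in>{1..n}. \<forall>j\<in>{1..n}. S i = S j"
proof (intro ballI)
  fix i j assume i: "i \<in> {1..n}" and j: "j \<in> {1..n}"
  have strategies: "\<And>k. k \<in> {1..n} \<Longrightarrow> S k \<in> strategy_simplex"
    and best: "\<And>k s. k \<in> {1..n} \<Longrightarrow> s \<in> strategy_simplex \<Longrightarrow>
                 payoff u c s (others n S k) \<le> payoff u c (S k) (others n S k)"
    using NE by (simp_all add: nash_equilibrium_def)
  show "S i = S j"
  proof (rule best_responses_to_equal_totals_eq[OF u_zero u_concave u_diff c_convex strict])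
    show "S i + others n S i = S j + others n S j"
      using add_others i j by metis
  qed (use i j strategies best others_nonneg[OF strategies] in auto)
qed

end
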